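(* Let $K\subseteq\mathbb{R}^2$ be a centrally symmetric closed convex set with non-empty interior. Then $\mu_2(K)\le 2\mu_1(K)$.
   Context: For $j=1,2$, the $j$-th covering minimum is $\mu_j(K):=\inf\{t\ge0:\text{every }(2-j)\text{-dimensional affine subspace of }\mathbb{R}^2\text{ intersects }tK+\mathbb{Z}^2\}$. Thus $\mu_1(K)$ is the least $t$ such that every line meets $tK+\mathbb{Z}^2$, and $\mu_2(K)$ is the least $t$ such that $tK+\mathbb{Z}^2=\mathbb{R}^2$. $K$ is centrally symmetric if $K=2c-K$ for some $c\in\mathbb{R}^2$. *)

theory Defs
  imports "HOL-Analysis.Analysis"
begin

definition int_lattice :: "(real^2) set" where
  "int_lattice = {z. \<forall>i. z $ i \<in> \<int>}"

definition lattice_translates :: "real \<Rightarrow> (real^2) set \<Rightarrow> (real^2) set" where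
  "lattice_translates t K = {t *\<^sub>R x + z | x z. x \<in> K \<and> z \<in> int_lattice}"

definition covering_minimum :: "(real^2) set \<Rightarrow> nat \<Rightarrow> real" where
  "covering_minimum K j = Inf {t. t \<ge> 0 \<and>
     (\<forall>L. affine L \<and> aff_dim L = 2 - int j \<longrightarrow> L \<inter> lattice_translates t K \<noteq> {})}"

definition centrally_symmetric :: "(real^2) set \<Rightarrow> bool" where
  "centrally_symmetric K \<longleftrightarrow> (\<exists>c. K = (\<lambda>x. 2 *\<^sub>R c - x) ` K)"

end

theory Submission
  imports Defs
begin

text \<open>
  Let every line meet \<open>tK + \<int>\<^sup>2\<close>, where \<open>K\<close> has centre \<open>c\<close>, and put \<open>C = t(K - c)\<close>.
  Testing the lines \<open>\<langle>n, y\<rangle> = 1/2 + \<langle>n, tc\<rangle>\<close> shows that every nonzero integer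
  form \<open>n\<close> takes a value \<open>\<ge> 1/2\<close> on the symmetric body \<open>C\<close>. Let \<open>n\<^sub>0 = (a,b)\<close> minimise
  the support function \<open>h\<^sub>C\<close> over nonzero integer directions; it is primitive, so it extends
  to a unimodular pair \<open>(a,b), (c,d)\<close>. In the coordinates \<open>X = \<langle>(a,b), \<cdot>\<rangle>\<close>,
  \<open>Y = \<langle>(c,d), \<cdot>\<rangle>\<close> the maximisers of \<open>X\<close>, \<open>Y\<close> and \<open>Y - X\<close> on \<open>C\<close> force, by an
  elementary planar convexity argument, a chord of \<open>C\<close> of \<open>Y\<close>-length \<open>1/2\<close> on a line
  \<open>X = 1/4\<close> (after scaling). Together with its reflection this makes \<open>C\<close> contain
  translates of the segment \<open>[0, u/2]\<close> at every level \<open>|X| \<le> 1/4\<close>, where \<open>u\<close> is the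
  lattice vector with \<open>X u = 0\<close>, \<open>Y u = 1\<close>; hence \<open>2C + \<int>\<^sup>2 = \<real>\<^sup>2\<close>, i.e. \<open>2t\<close> works for
  \<open>\<mu>\<^sub>2\<close>.
\<close>

section \<open>Long chords of symmetric planar convex sets\<close>

definition seg_height :: "real \<Rightarrow> real \<Rightarrow> real \<Rightarrow> real \<Rightarrow> real \<Rightarrow> real" where
  "seg_height xv yv xw yw x = ((xw - x) * yv + (x - xv) * yw) / (xw - xv)"

lemma sum_ge_of_cross_mult:
  fixes N1 N2 D1 D2 c :: real
  assumes "0 \<le> E" "N1 * D2 + N2 * D1 - c * D1 * D2 = E" "0 < D1" "0 < D2"
  shows "c \<le> N1 / D1 + N2 / D2"
proof -
  have "N1 / D1 + N2 / D2 = (N1 * D2 + N2 * D1) / (D1 * D2)"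
    using assms by (simp add: field_simps)
  with assms show ?thesis by (simp add: le_divide_eq mult.assoc)
qed

text \<open>
  In the names, \<open>PA\<close>, \<open>mAP\<close>, \<open>mAQ\<close>,
  \<open>QA\<close>, \<open>QP\<close> stand for the segments \<open>[P,A]\<close>, \<open>[-A,P]\<close>, \<open>[-A,Q]\<close>, \<open>[Q,A]\<close>, \<open>[Q,P]\<close>, the
  first one cut at abscissa \<open>1/4\<close> and the second at \<open>-1/4\<close>; \<open>a = Y A\<close>, \<open>p = X P\<close>,
  \<open>q = X Q\<close>, and \<open>y\<close>, \<open>y'\<close> are the heights of \<open>P\<close>, \<open>Q\<close>. After cross-multiplication each
  inequality is certified by a sum of products of nonnegative factors; factors such as
  \<open>q - (-1/2)\<close> are written as differences so that splitting sums into nonnegative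
  summands never splits a factor.
\<close>

lemma height_sum_PA_PA:
  fixes a p y :: real
  assumes "0 \<le> a" "a \<le> 1/2" "-1/2 \<le> p" "p \<le> -1/4" "1/2 \<le> y"
  shows "1/2 \<le> seg_height p y (1/2) a (1/4) + seg_height p y (1/2) a (-1/4)"
  unfolding seg_height_def
proof (rule sum_ge_of_cross_mult)
  show "0 \<le> (1/2-p)*(y-1/2) + 2*((1/2-p)*((-p)*a)) + (1/2-p)*(1/4 - (-p/2))"
    using assms by (intro add_nonneg_nonneg mult_nonneg_nonneg) auto
qed (simp add: field_simps power2_eq_square, use assms in linarith, use assms in linarith)

lemma height_sum_PA_mAP:
  fixes a p y :: real
  assumes "0 \<le> a" "a \<le> 1/2" "-1/4 \<le> p" "p \<le> 0" "1/2 \<le> y"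
  shows "1/2 \<le> seg_height p y (1/2) a (1/4) + seg_height (-1/2) (-a) p y (-1/4)"
  unfolding seg_height_def
proof (rule sum_ge_of_cross_mult)
  show "0 \<le> (1/4)*(y - 1/2) + (1/2)*((-p)*a) + (1/2)*p^2"
    using assms by (intro add_nonneg_nonneg mult_nonneg_nonneg) auto
qed (simp add: field_simps power2_eq_square, use assms in linarith, use assms in linarith)

lemma height_sum_mAQ_mAQ:
  fixes a q y :: real
  assumes "0 \<le> a" "a \<le> 1/2" "1/4 \<le> q" "q \<le> 1/2" "1/2 + q \<le> y"
  shows "1/2 \<le> seg_height (-1/2) (-a) q y (1/4) + seg_height (-1/2) (-a) q y (-1/4)"
  unfolding seg_height_def
proof (rule sum_ge_of_cross_mult)
  show "0 \<le> (q - (-1/2))*(y-1/2-q) + (1/2)*((q - (-1/2))*(1/2 - q)) + (q - (-1/2))*(q*(1-2*a))"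
    using assms by (intro add_nonneg_nonneg mult_nonneg_nonneg) auto
qed (simp add: field_simps power2_eq_square, use assms in linarith, use assms in linarith)

lemma height_sum_QA_mAQ:
  fixes a q y :: real
  assumes "0 \<le> a" "a \<le> 1/2" "0 \<le> q" "q \<le> 1/4" "1/2 + q \<le> y"
  shows "1/2 \<le> seg_height q y (1/2) a (1/4) + seg_height (-1/2) (-a) q y (-1/4)"
  unfolding seg_height_def
proof (rule sum_ge_of_cross_mult)
  show "0 \<le> (1/4)*(y - 1/2 - q) + (1/2)*(q*(1/2 - a)) + (1/2)*q^2"
    using assms by (intro add_nonneg_nonneg mult_nonneg_nonneg) auto
qed (simp add: field_simps power2_eq_square, use assms in linarith, use assms in linarith)

lemma height_sum_QP_QP:
  fixes p q y y' :: real
  assumes "1/4 \<le> p" "p \<le> 1/2" "-1/2 \<le> q" "q \<le> -1/4" "1/2 \<le> y" "1/2 + q \<le> y'"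
  shows "1/2 \<le> seg_height q y' p y (1/4) + seg_height q y' p y (-1/4)"
  unfolding seg_height_def
proof (rule sum_ge_of_cross_mult)
  show "0 \<le> (p-q)*(2*(p*(y'-1/2-q)) + 2*((-q)*(y-1/2)) + (1/2)*(p*(1 - (-2*q))) + (1/2)*((-q)*(1-2*p)))"
    using assms by (intro add_nonneg_nonneg mult_nonneg_nonneg) auto
qed (simp add: field_simps power2_eq_square, use assms in linarith, use assms in linarith)

lemma height_sum_PA_QP:
  fixes a p q y y' :: real
  assumes "0 \<le> a" "a \<le> 1/2" "0 \<le> p" "p \<le> 1/4" "-1/2 \<le> q" "q \<le> -1/4" "1/2 \<le> y" "1/2 + q \<le> y'"
  shows "1/2 \<le> seg_height p y (1/2) a (1/4) + seg_height q y' p y (-1/4)"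
  unfolding seg_height_def
proof (rule sum_ge_of_cross_mult)
  show "0 \<le> p*((q - (-1/2))*(1/4-p)) + (1/2)*p^2 + (y-1/2)*(p*(q - (-1/2))) + (3/4)*((y-1/2)*(-q-1/4))
      + (1/16)*(y-1/2) + (y'-1/2-q)*((p - (-1/4))*(1/2-p)) + a*((1/4-p)*(p-q))"
    using assms by (intro add_nonneg_nonneg mult_nonneg_nonneg) auto
qed (simp add: field_simps power2_eq_square, use assms in linarith, use assms in linarith)

lemma height_sum_PA_mAQ:
  fixes a p q y y' :: real
  assumes "0 \<le> a" "a \<le> 1/2" "0 \<le> p" "p \<le> 1/4" "-1/4 \<le> q" "q \<le> 0" "1/2 \<le> y" "1/2 + q \<le> y'"
  shows "1/2 \<le> seg_height p y (1/2) a (1/4) + seg_height (-1/2) (-a) q y' (-1/4)"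
  unfolding seg_height_def
proof (rule sum_ge_of_cross_mult)
  have "0 \<le> p*(q - (-1/2)) - (p+q)*a"
  proof (cases "p + q \<le> 0")
    case True
    have "0 \<le> p*(q - (-1/2))" "(p+q)*a \<le> 0"
      using True assms by (simp_all add: mult_nonpos_nonneg)
    then show ?thesis by linarith
  next
    case False
    have "(p+q)*a \<le> (p+q)*(1/2)" "0 \<le> (-q)*(1/2 - p)"
      using False assms by (intro mult_left_mono mult_nonneg_nonneg; simp)+
    then show ?thesis by (simp add: algebra_simps)
  qed
  then show "0 \<le> (1/4)*((q - (-1/2))*(y-1/2)) + (1/4)*((1/2-p)*(y'-1/2-q)) + (1/4)*(p*(q - (-1/2)) - (p+q)*a)"
    using assms by (intro add_nonneg_nonneg mult_nonneg_nonneg) auto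
qed (simp add: field_simps, use assms in linarith, use assms in linarith)

lemma height_sum_QP_mAQ:
  fixes a p q y y' :: real
  assumes "0 \<le> a" "a \<le> 1/2" "1/4 \<le> p" "p \<le> 1/2" "-1/4 \<le> q" "q \<le> 0" "1/2 \<le> y" "1/2 + q \<le> y'"
  shows "1/2 \<le> seg_height q y' p y (1/4) + seg_height (-1/2) (-a) q y' (-1/4)"
  unfolding seg_height_def
proof (rule sum_ge_of_cross_mult)
  show "0 \<le> (-q)*((1/2-p)*(q - (-1/4))) + (1/2)*q^2 + (y-1/2)*((1/4-q)*(q - (-1/2))) + (y'-1/2-q)*((p-1/4)*(q - (-1/2)))
      + (1/4)*((y'-1/2-q)*(p-q)) + (1/2-a)*((q - (-1/4))*(p-q))"
    using assms by (intro add_nonneg_nonneg mult_nonneg_nonneg) auto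
qed (simp add: field_simps power2_eq_square, use assms in linarith, use assms in linarith)

lemma point_of_segment_at:
  fixes X Y :: "'a::real_vector \<Rightarrow> real"
  assumes "convex S" "V \<in> S" "W \<in> S" "linear X" "linear Y"
    and "X V \<le> x" "x \<le> X W" "X V < X W"
  shows "\<exists>U\<in>S. X U = x \<and> Y U = seg_height (X V) (Y V) (X W) (Y W) x"
proof -
  define t where "t = (x - X V) / (X W - X V)"
  have t: "0 \<le> t" "t \<le> 1" "t * (X W - X V) = x - X V" "1 - t = (X W - x) / (X W - X V)"
    using assms(6-8) by (auto simp: t_def field_simps)
  define U where "U = (1 - t) *\<^sub>R V + t *\<^sub>R W"
  have "U \<in> S" unfolding U_def using assms(1-3) t by (intro convexD) auto
  moreover have "X U = x"
  proof -
    have "X U = (1 - t) * X V + t * X W"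
      using assms(4) by (simp add: U_def linear_add linear_scale)
    also have "\<dots> = X V + t * (X W - X V)" by (simp add: algebra_simps)
    finally have "X U = X V + t * (X W - X V)" .
    then show ?thesis using t(3) by simp
  qed
  moreover have "Y U = seg_height (X V) (Y V) (X W) (Y W) x"
  proof -
    have "Y U = (1 - t) * Y V + t * Y W"
      using assms(5) by (simp add: U_def linear_add linear_scale)
    also have "\<dots> = seg_height (X V) (Y V) (X W) (Y W) x"
      unfolding t(4) by (simp add: t_def seg_height_def add_divide_distrib)
    finally show ?thesis .
  qed
  ultimately show ?thesis by blast
qed

lemma long_chord_of_segments:
  fixes X Y :: "'a::real_vector \<Rightarrow> real"
  assumes cvx: "convex S" and neg: "\<forall>x\<in>S. -x \<in> S" and lin: "linear X" "linear Y"
    and seg1: "V1 \<in> S" "W1 \<in> S" "X V1 \<le> 1/4" "1/4 \<le> X W1" "X V1 < X W1"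
    and seg2: "V2 \<in> S" "W2 \<in> S" "X V2 \<le> -1/4" "-1/4 \<le> X W2" "X V2 < X W2"
    and heights: "1/2 \<le> seg_height (X V1) (Y V1) (X W1) (Y W1) (1/4) + seg_height (X V2) (Y V2) (X W2) (Y W2) (-1/4)"
  shows "\<exists>U\<in>S. \<exists>L\<in>S. X U = 1/4 \<and> X L = 1/4 \<and> 1/2 \<le> Y U - Y L"
proof -
  obtain U where U: "U \<in> S" "X U = 1/4" "Y U = seg_height (X V1) (Y V1) (X W1) (Y W1) (1/4)"
    using point_of_segment_at[OF cvx seg1(1,2) lin seg1(3-5)] by blast
  obtain W where W: "W \<in> S" "X W = -1/4" "Y W = seg_height (X V2) (Y V2) (X W2) (Y W2) (-1/4)"
    using point_of_segment_at[OF cvx seg2(1,2) lin seg2(3-5)] by blast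
  have "-W \<in> S" "X (-W) = 1/4" "Y (-W) = - Y W"
    using neg W(1) W(2) lin by (simp_all add: linear_neg)
  then show ?thesis using U W heights by (intro bexI[of _ U] bexI[of _ "-W"]) auto
qed

lemma long_chord_at_quarter:
  fixes X Y :: "'a::real_vector \<Rightarrow> real"
  assumes cvx: "convex S" and neg: "\<forall>x\<in>S. -x \<in> S" and lin: "linear X" "linear Y"
    and A: "A \<in> S" "X A = 1/2" "0 \<le> Y A" "Y A \<le> 1/2"
    and P: "P \<in> S" "-1/2 \<le> X P" "X P \<le> 1/2" "1/2 \<le> Y P"
    and Q: "Q \<in> S" "-1/2 \<le> X Q" "X Q \<le> 1/2" "1/2 \<le> Y Q - X Q"
  shows "\<exists>U\<in>S. \<exists>L\<in>S. X U = 1/4 \<and> X L = 1/4 \<and> 1/2 \<le> Y U - Y L"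
proof -
  have mA: "-A \<in> S" "X (-A) = -1/2" "Y (-A) = - Y A"
    using neg A(1) A(2) lin by (simp_all add: linear_neg)
  note chord = long_chord_of_segments[OF cvx neg lin]
  consider "X P \<le> -1/4" | "-1/4 < X P" "X P \<le> 0"
    | "0 < X P" "1/4 \<le> X Q" | "0 < X P" "0 \<le> X Q" "X Q < 1/4"
    | "1/4 \<le> X P" "X Q \<le> -1/4" | "1/4 \<le> X P" "-1/4 < X Q" "X Q < 0"
    | "0 < X P" "X P < 1/4" "X Q \<le> -1/4" | "0 < X P" "X P < 1/4" "-1/4 < X Q" "X Q < 0"
    by linarith
  then show ?thesis
  proof cases
    case 1
    then show ?thesis using chord[OF P(1) A(1) _ _ _ P(1) A(1)] A P
      height_sum_PA_PA[of "Y A" "X P" "Y P"] by simp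
  next
    case 2
    then show ?thesis using chord[OF P(1) A(1) _ _ _ mA(1) P(1)] A P mA
      height_sum_PA_mAP[of "Y A" "X P" "Y P"] by simp
  next
    case 3
    then show ?thesis using chord[OF mA(1) Q(1) _ _ _ mA(1) Q(1)] A Q mA
      height_sum_mAQ_mAQ[of "Y A" "X Q" "Y Q"] by simp
  next
    case 4
    then show ?thesis using chord[OF Q(1) A(1) _ _ _ mA(1) Q(1)] A Q mA
      height_sum_QA_mAQ[of "Y A" "X Q" "Y Q"] by simp
  next
    case 5
    then show ?thesis using chord[OF Q(1) P(1) _ _ _ Q(1) P(1)] P Q
      height_sum_QP_QP[of "X P" "X Q" "Y P" "Y Q"] by simp
  next
    case 6
    then show ?thesis using chord[OF Q(1) P(1) _ _ _ mA(1) Q(1)] A P Q mA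
      height_sum_QP_mAQ[of "Y A" "X P" "X Q" "Y P" "Y Q"] by simp
  next
    case 7
    then show ?thesis using chord[OF P(1) A(1) _ _ _ Q(1) P(1)] A P Q
      height_sum_PA_QP[of "Y A" "X P" "X Q" "Y P" "Y Q"] by simp
  next
    case 8
    then show ?thesis using chord[OF P(1) A(1) _ _ _ mA(1) Q(1)] A P Q mA
      height_sum_PA_mAQ[of "Y A" "X P" "X Q" "Y P" "Y Q"] by simp
  qed
qed

lemma long_chord_at_quarter_scaled:
  fixes X Y :: "'a::real_vector \<Rightarrow> real"
  assumes cvx: "convex S" and neg: "\<forall>x\<in>S. -x \<in> S" and lin: "linear X" "linear Y" and "1/2 \<le> \<alpha>"
    and A: "A \<in> S" "X A = \<alpha>" "0 \<le> Y A" "Y A \<le> \<alpha>"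
    and P: "P \<in> S" "\<bar>X P\<bar> \<le> \<alpha>" "\<alpha> \<le> Y P"
    and Q: "Q \<in> S" "\<bar>X Q\<bar> \<le> \<alpha>" "\<alpha> \<le> Y Q - X Q"
  shows "\<exists>U\<in>S. \<exists>L\<in>S. X U = 1/4 \<and> X L = 1/4 \<and> 1/2 \<le> Y U - Y L"
proof -
  define s where "s = 1 / (2 * \<alpha>)"
  have s: "0 < s" "s \<le> 1" using \<open>1/2 \<le> \<alpha>\<close> by (simp_all add: s_def field_simps)
  have lin': "linear (\<lambda>x. s * X x)" "linear (\<lambda>x. s * Y x)"
    by (intro linearI; simp add: linear_add[OF lin(1)] linear_scale[OF lin(1)] linear_add[OF lin(2)]
        linear_scale[OF lin(2)] distrib_left mult.left_commute)+
  have "\<exists>U\<in>S. \<exists>L\<in>S. s * X U = 1/4 \<and> s * X L = 1/4 \<and> 1/2 \<le> s * Y U - s * Y L"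
    by (rule long_chord_at_quarter[OF cvx neg lin' A(1) _ _ _ P(1) _ _ _ Q(1)])
      (use \<open>1/2 \<le> \<alpha>\<close> A P Q in \<open>simp_all add: s_def field_simps abs_le_iff\<close>)
  then obtain U L where UL: "U \<in> S" "L \<in> S" "s * X U = 1/4" "s * X L = 1/4" "1/2 \<le> s * Y U - s * Y L"
    by blast
  have "0 \<in> S" using convexD[OF cvx A(1) bspec[OF neg A(1)], of "1/2" "1/2"] by simp
  then have "s *\<^sub>R U \<in> S" "s *\<^sub>R L \<in> S"
    using convexD[OF cvx _ UL(1), of 0 "1 - s" s] convexD[OF cvx _ UL(2), of 0 "1 - s" s] s by simp_all
  moreover have "X (s *\<^sub>R U) = 1/4" "X (s *\<^sub>R L) = 1/4" "1/2 \<le> Y (s *\<^sub>R U) - Y (s *\<^sub>R L)"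
    using UL(3-5) by (simp_all add: linear_scale[OF lin(1)] linear_scale[OF lin(2)])
  ultimately show ?thesis by blast
qed

section \<open>Integer linear forms and lattice widths\<close>

definition lform :: "int \<times> int \<Rightarrow> real^2 \<Rightarrow> real" where
  "lform n x = of_int (fst n) * x$1 + of_int (snd n) * x$2"

lemma linear_lform: "linear (lform n)"
  by (auto simp: linear_iff lform_def algebra_simps)

lemma lform_in_Ints: "z \<in> int_lattice \<Longrightarrow> lform n z \<in> \<int>"
  by (auto simp: int_lattice_def lform_def intro!: Ints_add Ints_mult)

lemma lform_eq_inner: "lform n x = vector [of_int (fst n), of_int (snd n)] \<bullet> x"
  by (simp add: lform_def inner_vec_def sum_2)

lemma exists_lform_ge_in_cball:
  assumes "0 \<le> r"
  shows "\<exists>x\<in>cball 0 r. r * max \<bar>of_int (fst n)\<bar> \<bar>of_int (snd n)\<bar> \<le> lform n x"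
proof -
  define x1 :: "real^2" where "x1 = (r * sgn (of_int (fst n))) *\<^sub>R axis 1 1"
  define x2 :: "real^2" where "x2 = (r * sgn (of_int (snd n))) *\<^sub>R axis 2 1"
  have "x1 \<in> cball 0 r" "x2 \<in> cball 0 r"
    using assms by (auto simp: x1_def x2_def abs_mult sgn_if)
  moreover have "lform n x1 = r * \<bar>of_int (fst n)\<bar>" "lform n x2 = r * \<bar>of_int (snd n)\<bar>"
    by (simp_all add: x1_def x2_def lform_def axis_def abs_sgn mult.commute)
  moreover have "max \<bar>of_int (fst n)\<bar> \<bar>of_int (snd n)\<bar> \<in> {\<bar>of_int (fst n)\<bar>, \<bar>of_int (snd n)\<bar> :: real}"
    by (simp add: max_def)
  ultimately show ?thesis by (metis insert_iff order_refl singletonD)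
qed

definition support_fun :: "(real^2) set \<Rightarrow> int \<times> int \<Rightarrow> real" where
  "support_fun C n = Sup (lform n ` C)"

lemma lform_le_support_fun:
  assumes "compact C" "x \<in> C"
  shows "lform n x \<le> support_fun C n"
proof -
  have "compact (lform n ` C)"
    using assms(1) linear_lform by (intro compact_continuous_image linear_continuous_on linear_conv_bounded_linear[THEN iffD1])
  then show ?thesis
    unfolding support_fun_def using assms(2) by (intro cSup_upper bounded_imp_bdd_above compact_imp_bounded) auto
qed

lemma support_fun_attained:
  assumes "compact C" "C \<noteq> {}"
  shows "\<exists>x\<in>C. lform n x = support_fun C n"
proof -
  obtain x where "x \<in> C" "\<forall>y\<in>C. lform n y \<le> lform n x"
    using continuous_attains_sup[OF assms] linear_lform
    by (metis linear_continuous_on linear_conv_bounded_linear)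
  moreover from this have "support_fun C n = lform n x"
    unfolding support_fun_def by (intro cSup_eq_maximum) auto
  ultimately show ?thesis by auto
qed

lemma finite_int_box: "finite {n :: int \<times> int. \<bar>fst n\<bar> \<le> N \<and> \<bar>snd n\<bar> \<le> N}"
proof -
  have "{n :: int \<times> int. \<bar>fst n\<bar> \<le> N \<and> \<bar>snd n\<bar> \<le> N} \<subseteq> {-N..N} \<times> {-N..N}" by auto
  then show ?thesis by (rule finite_subset) auto
qed

lemma support_fun_has_minimum:
  assumes "compact C" "0 < r" "cball 0 r \<subseteq> C"
  shows "\<exists>n0. n0 \<noteq> (0,0) \<and> (\<forall>n. n \<noteq> (0,0) \<longrightarrow> support_fun C n0 \<le> support_fun C n)"
proof -
  define N where "N = max 1 \<lceil>support_fun C (1,0) / r\<rceil>"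
  define B where "B = {n. n \<noteq> (0,0) \<and> \<bar>fst n\<bar> \<le> N \<and> \<bar>snd n\<bar> \<le> N}"
  have B: "finite B" "(1,0) \<in> B"
    using finite_int_box[of N] by (auto simp: B_def N_def elim: finite_subset[rotated])
  have outside: "support_fun C (1,0) < support_fun C n" if "n \<notin> B" "n \<noteq> (0,0)" for n
  proof -
    obtain x where x: "x \<in> cball 0 r" "r * max \<bar>of_int (fst n)\<bar> \<bar>of_int (snd n)\<bar> \<le> lform n x"
      using exists_lform_ge_in_cball[of r n] assms(2) by auto
    have "support_fun C (1,0) / r \<le> of_int N" unfolding N_def by linarith
    then have "support_fun C (1,0) \<le> r * of_int N" using assms(2) by (simp add: field_simps)
    also have "\<dots> < r * max \<bar>of_int (fst n)\<bar> \<bar>of_int (snd n)\<bar>"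
      using that assms(2) by (auto simp: B_def max_def)
    also have "\<dots> \<le> support_fun C n"
    proof -
      have "x \<in> C" using x(1) assms(3) by blast
      then show ?thesis using x(2) lform_le_support_fun[OF assms(1), of x n] by linarith
    qed
    finally show ?thesis .
  qed
  define n0 where "n0 = arg_min_on (support_fun C) B"
  have n0: "n0 \<in> B" "\<And>n. n \<in> B \<Longrightarrow> support_fun C n0 \<le> support_fun C n"
    using arg_min_if_finite(1)[OF B(1)] arg_min_least[OF B(1)] B(2) unfolding n0_def by blast+
  have "support_fun C n0 \<le> support_fun C n" if "n \<noteq> (0,0)" for n
  proof (cases "n \<in> B")
    case False
    then show ?thesis using n0(2)[OF B(2)] outside[OF False that] by linarith
  qed (use n0 in blast)
  moreover have "n0 \<noteq> (0,0)" using n0(1) by (simp add: B_def)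
  ultimately show ?thesis by blast
qed

lemma support_fun_minimizer_coprime:
  assumes "compact C" "C \<noteq> {}" "(a,b) \<noteq> (0,0)" "0 < support_fun C (a,b)"
    and min: "\<And>n. n \<noteq> (0,0) \<Longrightarrow> support_fun C (a,b) \<le> support_fun C n"
  shows "coprime a b"
proof (rule ccontr)
  assume "\<not> coprime a b"
  define g where "g = gcd a b"
  have "0 \<le> g" "g \<noteq> 0" "g \<noteq> 1"
    using assms(3) \<open>\<not> coprime a b\<close> by (auto simp: g_def coprime_iff_gcd_eq_1)
  then have g2: "2 \<le> g" by arith
  define n1 where "n1 = (a div g, b div g)"
  have ab: "a = g * (a div g)" "b = g * (b div g)" by (simp_all add: g_def)
  then have "n1 \<noteq> (0,0)" using assms(3) by (auto simp: n1_def)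
  obtain x where x: "x \<in> C" "lform n1 x = support_fun C n1"
    using support_fun_attained[OF assms(1,2)] by blast
  have "real_of_int a = of_int g * of_int (a div g)" "real_of_int b = of_int g * of_int (b div g)"
    using ab by (metis of_int_mult)+
  then have "lform (a,b) x = of_int g * lform n1 x"
    by (simp add: n1_def lform_def algebra_simps)
  then have "of_int g * support_fun C n1 \<le> support_fun C (a,b)"
    using x lform_le_support_fun[OF assms(1) x(1), of "(a,b)"] by simp
  moreover have "2 * support_fun C n1 \<le> of_int g * support_fun C n1"
    using g2 min[OF \<open>n1 \<noteq> (0,0)\<close>] assms(4) by (intro mult_right_mono) auto
  ultimately show False using min[OF \<open>n1 \<noteq> (0,0)\<close>] assms(4) by linarith
qed

section \<open>Covering the plane by a doubled body\<close>

lemma unimodular_completion: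
  assumes "coprime a b" "0 < \<alpha>" "lform (a,b) A = \<alpha>"
  shows "\<exists>c d. a * d - b * c = 1 \<and> 0 \<le> lform (c,d) A \<and> lform (c,d) A < \<alpha>"
proof -
  obtain u v where uv: "u * a + v * b = 1"
    using bezout_int[of a b] assms(1) by (auto simp: coprime_iff_gcd_eq_1)
  define k where "k = \<lfloor>lform (-v,u) A / \<alpha>\<rfloor>"
  have "lform (-v - k*a, u - k*b) A = lform (-v,u) A - of_int k * lform (a,b) A"
    by (simp add: lform_def algebra_simps)
  moreover have "of_int k * \<alpha> \<le> lform (-v,u) A" "lform (-v,u) A < (of_int k + 1) * \<alpha>"
    using assms(2) floor_divide_lower[of \<alpha>] floor_divide_upper[of \<alpha>] unfolding k_def by auto
  moreover have "a * (u - k*b) - b * (-v - k*a) = 1" using uv by (simp add: algebra_simps)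
  ultimately show ?thesis using assms(3) by (intro exI[of _ "-v - k*a"] exI[of _ "u - k*b"]) (auto simp: algebra_simps)
qed

text \<open>
  Minimality of \<open>\<alpha> = h\<^sub>C(a,b)\<close> gives \<open>h\<^sub>C(c,d) \<ge> \<alpha>\<close> and \<open>h\<^sub>C(c-a,d-b) \<ge> \<alpha>\<close>, i.e. the heights of the
  points \<open>P\<close>, \<open>Q\<close> required by the chord lemma; the choice of \<open>(c,d)\<close> modulo \<open>(a,b)\<close> puts
  the maximiser \<open>A\<close> of \<open>X\<close> at height in \<open>[0, \<alpha>)\<close>.
\<close>

lemma long_chord_in_minimal_direction:
  assumes "compact C" "convex C" and neg: "\<forall>x\<in>C. -x \<in> C" and "0 < r" "cball 0 r \<subseteq> C"
    and width: "\<And>n. n \<noteq> (0,0) \<Longrightarrow> \<exists>x\<in>C. 1/2 \<le> lform n x"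
  shows "\<exists>a b c d. a * d - b * c = 1 \<and> (\<exists>U\<in>C. \<exists>L\<in>C.
    lform (a,b) U = 1/4 \<and> lform (a,b) L = 1/4 \<and> 1/2 \<le> lform (c,d) U - lform (c,d) L)"
proof -
  let ?h = "support_fun C"
  have "C \<noteq> {}" using assms(4,5) by auto
  have h_ge: "1/2 \<le> ?h n" if "n \<noteq> (0,0)" for n
    using width[OF that] lform_le_support_fun[OF assms(1)] by (meson order_trans)
  obtain a b where ab: "(a,b) \<noteq> (0,0)" and min: "\<And>n. n \<noteq> (0,0) \<Longrightarrow> ?h (a,b) \<le> ?h n"
    using support_fun_has_minimum[OF assms(1,4,5)] by auto
  define \<alpha> where "\<alpha> = ?h (a,b)"
  have "1/2 \<le> \<alpha>" unfolding \<alpha>_def using h_ge[OF ab] .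
  then have "coprime a b"
    using support_fun_minimizer_coprime[OF assms(1) \<open>C \<noteq> {}\<close> ab _ min] by (simp add: \<alpha>_def)
  obtain A where A: "A \<in> C" "lform (a,b) A = \<alpha>"
    using support_fun_attained[OF assms(1) \<open>C \<noteq> {}\<close>] unfolding \<alpha>_def by blast
  obtain c d where det: "a * d - b * c = 1" and cd: "0 \<le> lform (c,d) A" "lform (c,d) A < \<alpha>"
    using unimodular_completion[OF \<open>coprime a b\<close> _ A(2)] \<open>1/2 \<le> \<alpha>\<close> by auto
  have "(c,d) \<noteq> (0,0)" "(c-a, d-b) \<noteq> (0,0)" using det by (auto simp: algebra_simps)
  obtain P where P: "P \<in> C" "lform (c,d) P = ?h (c,d)"
    using support_fun_attained[OF assms(1) \<open>C \<noteq> {}\<close>] by blast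
  obtain Q where Q: "Q \<in> C" "lform (c-a,d-b) Q = ?h (c-a,d-b)"
    using support_fun_attained[OF assms(1) \<open>C \<noteq> {}\<close>] by blast
  have X_bound: "\<bar>lform (a,b) x\<bar> \<le> \<alpha>" if "x \<in> C" for x
    using lform_le_support_fun[OF assms(1) that, of "(a,b)"]
      lform_le_support_fun[OF assms(1) bspec[OF neg that], of "(a,b)"]
      linear_neg[OF linear_lform, of "(a,b)" x] unfolding \<alpha>_def by linarith
  have P_ge: "\<alpha> \<le> lform (c,d) P" using P(2) min[OF \<open>(c,d) \<noteq> (0,0)\<close>] by (simp add: \<alpha>_def)
  have Q_ge: "\<alpha> \<le> lform (c,d) Q - lform (a,b) Q"
    using Q(2) min[OF \<open>(c-a,d-b) \<noteq> (0,0)\<close>] by (simp add: \<alpha>_def lform_def algebra_simps)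
  have "\<exists>U\<in>C. \<exists>L\<in>C. lform (a,b) U = 1/4 \<and> lform (a,b) L = 1/4 \<and> 1/2 \<le> lform (c,d) U - lform (c,d) L"
    by (rule long_chord_at_quarter_scaled[OF assms(2) neg linear_lform linear_lform \<open>1/2 \<le> \<alpha>\<close> A(1,2)
          cd(1) less_imp_le[OF cd(2)] P(1) X_bound[OF P(1)] P_ge Q(1) X_bound[OF Q(1)] Q_ge])
  then show ?thesis using det by blast
qed

lemma int_lattice_int_combination:
  "m \<in> int_lattice \<Longrightarrow> u \<in> int_lattice \<Longrightarrow> of_int k *\<^sub>R m + of_int j *\<^sub>R u \<in> int_lattice"
  unfolding int_lattice_def by (simp add: Ints_add Ints_mult)

lemma unimodular_dual_basis:
  fixes a b c d :: int
  assumes "a * d - b * c = 1"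
  defines "m \<equiv> vector [of_int d, - of_int c] :: real^2" and "u \<equiv> vector [- of_int b, of_int a] :: real^2"
  shows "m \<in> int_lattice" "u \<in> int_lattice" "lform (a,b) m = 1" "lform (a,b) u = 0"
    "w = lform (a,b) w *\<^sub>R m + lform (c,d) w *\<^sub>R u"
proof -
  have det: "real_of_int a * of_int d - of_int b * of_int c = 1"
    using assms(1) by (metis of_int_1 of_int_diff of_int_mult)
  show "m \<in> int_lattice" "u \<in> int_lattice"
    by (auto simp: m_def u_def int_lattice_def forall_2)
  show "lform (a,b) m = 1" "lform (a,b) u = 0"
    using det by (simp_all add: m_def u_def lform_def algebra_simps)
  have "lform (a,b) w *\<^sub>R m + lform (c,d) w *\<^sub>R u = (of_int a * of_int d - of_int b * of_int c) *\<^sub>R w"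
    by (simp add: vec_eq_iff forall_2 m_def u_def lform_def algebra_simps)
  then show "w = lform (a,b) w *\<^sub>R m + lform (c,d) w *\<^sub>R u"
    using det by simp
qed

lemma convex_shorter_step:
  assumes "convex C" "L \<in> C" "L + g *\<^sub>R u \<in> C" "0 \<le> s" "s \<le> g"
  shows "L + s *\<^sub>R u \<in> C"
proof (cases "g = 0")
  case True
  then show ?thesis using assms by simp
next
  case False
  have "(1 - s/g) *\<^sub>R L + (s/g) *\<^sub>R (L + g *\<^sub>R u) = L + s *\<^sub>R u"
    using False by (simp add: algebra_simps)
  moreover have "0 \<le> s/g" "s/g \<le> 1" using False assms(4,5) by (auto simp: field_simps)
  ultimately show ?thesis using convexD[OF assms(1-3), of "1 - s/g" "s/g"] by simp
qed

text \<open>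
  \<open>R\<close> interpolates between \<open>L\<close> (level \<open>1/4\<close>) and \<open>-(L + u/2)\<close> (level \<open>-1/4\<close>); the same
  interpolation between \<open>L + u/2\<close> and \<open>-L\<close> is exactly \<open>R + u/2\<close>.
\<close>

lemma symmetric_half_steps_over_strip:
  fixes X :: "'a::real_vector \<Rightarrow> real"
  assumes "convex C" "\<forall>x\<in>C. -x \<in> C" "linear X" "L \<in> C" "L + (1/2) *\<^sub>R u \<in> C"
    "X L = 1/4" "X u = 0" "\<bar>x\<bar> \<le> 1/4"
  shows "\<exists>R. R \<in> C \<and> R + (1/2) *\<^sub>R u \<in> C \<and> X R = x"
proof -
  define V where "V = L + (1/2) *\<^sub>R u"
  define t where "t = 2 * x + 1/2"
  have t: "0 \<le> t" "t \<le> 1" using assms(8) by (auto simp: t_def)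
  define R where "R = t *\<^sub>R L + (1 - t) *\<^sub>R (- V)"
  have "V \<in> C" "-V \<in> C" "-L \<in> C" using assms(2,4,5) by (auto simp: V_def)
  then have "R \<in> C" "t *\<^sub>R V + (1 - t) *\<^sub>R (- L) \<in> C"
    using convexD[OF assms(1) assms(4) \<open>-V \<in> C\<close>, of t "1 - t"] convexD[OF assms(1) \<open>V \<in> C\<close> \<open>-L \<in> C\<close>, of t "1 - t"] t
    unfolding R_def by auto
  moreover have "t *\<^sub>R V + (1 - t) *\<^sub>R (- L) = R + (1/2) *\<^sub>R u"
  proof -
    have "(t/2) *\<^sub>R u + ((1 - t)/2) *\<^sub>R u = (1/2) *\<^sub>R u"
      by (simp add: scaleR_add_left[symmetric] add_divide_distrib[symmetric])
    then show ?thesis by (simp add: R_def V_def algebra_simps)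
  qed
  moreover have "X R = x"
  proof -
    have "X R = t * X L - (1 - t) * (X L + (1/2) * X u)"
      by (simp add: R_def V_def linear_add[OF assms(3)] linear_scale[OF assms(3)] linear_neg[OF assms(3)]
        linear_diff[OF assms(3)] algebra_simps)
    then show ?thesis using assms(6,7) by (simp add: t_def algebra_simps)
  qed
  ultimately show ?thesis by metis
qed

lemma doubled_cover_from_strip_steps:
  fixes X Y :: "real^2 \<Rightarrow> real"
  assumes "convex C" "linear X" "m \<in> int_lattice" "u \<in> int_lattice" "X m = 1" "X u = 0"
    and decomp: "\<And>w. w = X w *\<^sub>R m + Y w *\<^sub>R u"
    and steps: "\<And>x. \<bar>x\<bar> \<le> 1/4 \<Longrightarrow> \<exists>R. R \<in> C \<and> R + (1/2) *\<^sub>R u \<in> C \<and> X R = x"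
  shows "\<exists>z\<in>int_lattice. \<exists>x\<in>C. p = 2 *\<^sub>R x + z"
proof -
  define k where "k = round (X p)"
  have "\<bar>(X p - of_int k) / 2\<bar> \<le> 1/4"
    using of_int_round_abs_le[of "X p"] by (simp add: k_def abs_minus_commute)
  then obtain R where R: "R \<in> C" "R + (1/2) *\<^sub>R u \<in> C" "X R = (X p - of_int k) / 2"
    using steps by blast
  define w where "w = p - of_int k *\<^sub>R m - 2 *\<^sub>R R"
  have "X w = 0"
    using assms(5) R(3) by (simp add: w_def linear_diff[OF assms(2)] linear_scale[OF assms(2)])
  define y where "y = Y w"
  have w: "w = y *\<^sub>R u"
    by (subst decomp[of w]) (simp add: \<open>X w = 0\<close> y_def)
  define j where "j = \<lfloor>y\<rfloor>"
  define \<tau> where "\<tau> = y - of_int j"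
  have "of_int j \<le> y" "y < of_int j + 1" unfolding j_def by linarith+
  then have "0 \<le> \<tau>/2" "\<tau>/2 \<le> 1/2" unfolding \<tau>_def by simp_all
  then have "R + (\<tau>/2) *\<^sub>R u \<in> C" by (rule convex_shorter_step[OF assms(1) R(1,2)])
  moreover have "p = 2 *\<^sub>R (R + (\<tau>/2) *\<^sub>R u) + (of_int k *\<^sub>R m + of_int j *\<^sub>R u)"
  proof -
    have "p = of_int k *\<^sub>R m + 2 *\<^sub>R R + w" by (simp add: w_def)
    also have "w = (\<tau> + of_int j) *\<^sub>R u" unfolding w \<tau>_def by simp
    finally show ?thesis by (simp add: algebra_simps)
  qed
  ultimately show ?thesis using int_lattice_int_combination[OF assms(3,4), of k j] by blast
qed

lemma doubled_body_covers_plane: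
  assumes "compact C" "convex C" "\<forall>x\<in>C. -x \<in> C" "0 < r" "cball 0 r \<subseteq> C"
    and "\<And>n. n \<noteq> (0,0) \<Longrightarrow> \<exists>x\<in>C. 1/2 \<le> lform n x"
  shows "\<exists>z\<in>int_lattice. \<exists>x\<in>C. p = 2 *\<^sub>R x + z"
proof -
  obtain a b c d U L where det: "a * d - b * c = 1" and UL: "U \<in> C" "L \<in> C"
    "lform (a,b) U = 1/4" "lform (a,b) L = 1/4" "1/2 \<le> lform (c,d) U - lform (c,d) L"
    using long_chord_in_minimal_direction[OF assms] by blast
  define m :: "real^2" where "m = vector [of_int d, - of_int c]"
  define u :: "real^2" where "u = vector [- of_int b, of_int a]"
  note basis = unimodular_dual_basis[OF det, folded m_def u_def]
  define g where "g = lform (c,d) U - lform (c,d) L"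
  have "U = L + g *\<^sub>R u"
    using basis(5)[of "U - L"] UL(3,4) by (simp add: g_def linear_diff[OF linear_lform] algebra_simps)
  then have "L + (1/2) *\<^sub>R u \<in> C"
    using convex_shorter_step[OF assms(2) UL(2), of g u "1/2"] UL(1,5) by (simp add: g_def)
  then show ?thesis
    using doubled_cover_from_strip_steps[OF assms(2) linear_lform basis(1-4) basis(5)]
      symmetric_half_steps_over_strip[OF assms(2,3) linear_lform UL(2) _ UL(4) basis(4)] by blast
qed

section \<open>From covering lines to covering points\<close>

lemma ball_centre_of_symmetric:
  fixes K :: "'a::real_normed_vector set"
  assumes "convex K" "\<forall>x\<in>K. 2 *\<^sub>R c - x \<in> K" "ball c' e \<subseteq> K"
  shows "ball c e \<subseteq> K"
proof
  fix y assume "y \<in> ball c e"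
  then have "c' + (y - c) \<in> K" "c' - (y - c) \<in> K"
    using assms(3) by (auto simp: dist_norm norm_minus_commute)
  then have "c' + (y - c) \<in> K" "2 *\<^sub>R c - (c' - (y - c)) \<in> K" using assms(2) by auto
  moreover have "(1/2) *\<^sub>R (c' + (y - c)) + (1/2) *\<^sub>R (2 *\<^sub>R c - (c' - (y - c))) = y"
    by (simp add: algebra_simps scaleR_add_left[symmetric])
  ultimately show "y \<in> K" using convexD[OF assms(1), of _ _ "1/2" "1/2"] by fastforce
qed

lemma width_of_line_covering:
  assumes sym: "\<forall>x\<in>K. 2 *\<^sub>R c - x \<in> K"
    and lines: "\<forall>L. affine L \<and> aff_dim L = 1 \<longrightarrow> L \<inter> lattice_translates t K \<noteq> {}"
    and "n \<noteq> (0,0)"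
  shows "\<exists>x\<in>K. 1/2 \<le> lform n (t *\<^sub>R (x - c))"
proof -
  define v :: "real^2" where "v = vector [of_int (fst n), of_int (snd n)]"
  have "v \<noteq> 0"
    using \<open>n \<noteq> (0,0)\<close> by (cases n) (auto simp: v_def vec_eq_iff forall_2)
  define L where "L = {y. v \<bullet> y = 1/2 + v \<bullet> (t *\<^sub>R c)}"
  have "affine L" "aff_dim L = 1"
    using \<open>v \<noteq> 0\<close> by (simp_all add: L_def affine_hyperplane aff_dim_hyperplane)
  then obtain x z where xz: "x \<in> K" "z \<in> int_lattice" "t *\<^sub>R x + z \<in> L"
    using lines unfolding lattice_translates_def by blast
  obtain k where k: "lform n z = of_int k" using lform_in_Ints[OF xz(2), of n] by (metis Ints_cases)
  have val: "lform n (t *\<^sub>R (x - c)) = 1/2 - of_int k"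
    using xz(3) k unfolding L_def lform_eq_inner[symmetric, of n, folded v_def]
    by (simp add: linear_add[OF linear_lform] linear_diff[OF linear_lform] linear_scale[OF linear_lform]
      right_diff_distrib)
  show ?thesis
  proof (cases "k \<le> 0")
    case True
    then show ?thesis using val xz(1) by (intro bexI[of _ x]) auto
  next
    case False
    have "t *\<^sub>R ((2 *\<^sub>R c - x) - c) = - (t *\<^sub>R (x - c))" by (simp add: scaleR_2 algebra_simps)
    then have "lform n (t *\<^sub>R ((2 *\<^sub>R c - x) - c)) = of_int k - 1/2"
      using val by (simp add: linear_neg[OF linear_lform])
    then show ?thesis using False sym xz(1) by (intro bexI[of _ "2 *\<^sub>R c - x"]) auto
  qed
qed

text \<open>
  \<open>C\<close> may be unbounded (a strip, say), and then its support function is not finite.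
  Directions outside a finite box are served by the inscribed ball, so it suffices to keep
  one witness for each of the finitely many remaining directions.
\<close>

lemma compact_subbody_with_width:
  assumes "closed C" "convex C" "\<forall>x\<in>C. -x \<in> C" "0 < r" "cball 0 r \<subseteq> C"
    and width: "\<And>n. n \<noteq> (0,0) \<Longrightarrow> \<exists>x\<in>C. 1/2 \<le> lform n x"
  obtains C' where "C' \<subseteq> C" "compact C'" "convex C'" "\<forall>x\<in>C'. -x \<in> C'" "cball 0 r \<subseteq> C'"
    "\<And>n. n \<noteq> (0,0) \<Longrightarrow> \<exists>x\<in>C'. 1/2 \<le> lform n x"
proof -
  define M where "M = \<lceil>1 / (2 * r)\<rceil>"
  define B where "B = {n. n \<noteq> (0,0) \<and> \<bar>fst n\<bar> \<le> M \<and> \<bar>snd n\<bar> \<le> M}"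
  have "finite B" using finite_int_box[of M] by (auto simp: B_def elim: finite_subset[rotated])
  have "\<forall>n\<in>B. \<exists>x. x \<in> C \<and> 1/2 \<le> lform n x" using width by (auto simp: B_def)
  then obtain w where w: "\<And>n. n \<in> B \<Longrightarrow> w n \<in> C \<and> 1/2 \<le> lform n (w n)"
    by (metis bchoice)
  have "bounded (w ` B)" using \<open>finite B\<close> by (simp add: finite_imp_bounded)
  then obtain R where R: "\<And>n. n \<in> B \<Longrightarrow> norm (w n) \<le> R" by (auto simp: bounded_iff)
  define C' where "C' = C \<inter> cball 0 (max r R)"
  have "\<exists>x\<in>C'. 1/2 \<le> lform n x" if "n \<noteq> (0,0)" for n
  proof (cases "n \<in> B")
    case True
    then have "w n \<in> C" "norm (w n) \<le> max r R" "1/2 \<le> lform n (w n)"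
      using w[OF True] R[OF True] by auto
    then show ?thesis by (intro bexI[of _ "w n"]) (auto simp: C'_def)
  next
    case False
    obtain x where x: "x \<in> cball 0 r" "r * max \<bar>of_int (fst n)\<bar> \<bar>of_int (snd n)\<bar> \<le> lform n x"
      using exists_lform_ge_in_cball[of r n] assms(4) by auto
    have "1 / (2 * r) \<le> of_int M" unfolding M_def by linarith
    then have "1/2 \<le> r * of_int M" using assms(4) by (simp add: field_simps)
    also have "\<dots> \<le> r * max \<bar>of_int (fst n)\<bar> \<bar>of_int (snd n)\<bar>"
    proof -
      have "M \<le> max \<bar>fst n\<bar> \<bar>snd n\<bar>" using False that unfolding B_def by auto
      then have "real_of_int M \<le> max \<bar>of_int (fst n)\<bar> \<bar>of_int (snd n)\<bar>"
        by (metis of_int_abs of_int_le_iff of_int_max)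
      then show ?thesis using assms(4) by simp
    qed
    finally show ?thesis using x assms(5) by (intro bexI[of _ x]) (auto simp: C'_def)
  qed
  moreover have "C' \<subseteq> C" "compact C'" "convex C'" "\<forall>x\<in>C'. -x \<in> C'" "cball 0 r \<subseteq> C'"
    using assms(1-3,5) by (auto simp: C'_def intro!: closed_Int_compact convex_Int)
  ultimately show ?thesis using that by blast
qed

lemma centred_scaling_of_symmetric_body:
  fixes K :: "(real^2) set"
  assumes "closed K" "convex K" and sym: "\<forall>x\<in>K. 2 *\<^sub>R c - x \<in> K" and "0 < e" "ball c e \<subseteq> K" "0 < t"
  defines "C \<equiv> (\<lambda>x. t *\<^sub>R (x - c)) ` K"
  shows "closed C" "convex C" "\<forall>y\<in>C. -y \<in> C" "cball 0 (t * e / 2) \<subseteq> C"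
proof -
  have "C = (\<lambda>x. t *\<^sub>R x) ` ((\<lambda>x. x - c) ` K)" by (simp add: C_def image_image)
  then show "closed C" "convex C"
    using assms(1,2) by (simp_all add: closed_scaling closed_translation_subtract convex_scaling
      convex_translation_subtract)
  show "\<forall>y\<in>C. -y \<in> C"
  proof
    fix y assume "y \<in> C"
    then obtain x where "x \<in> K" "y = t *\<^sub>R (x - c)" by (auto simp: C_def)
    moreover have "-(t *\<^sub>R (x - c)) = t *\<^sub>R ((2 *\<^sub>R c - x) - c)" by (simp add: scaleR_2 algebra_simps)
    ultimately show "-y \<in> C" using sym by (auto simp: C_def)
  qed
  show "cball 0 (t * e / 2) \<subseteq> C"
  proof
    fix y :: "real^2" assume "y \<in> cball 0 (t * e / 2)"
    moreover have "0 < t * e" using assms(4,6) by simp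
    ultimately have "norm y < t * e" by simp
    then have "dist c (c + (1/t) *\<^sub>R y) < e"
      using assms(6) by (simp add: dist_norm field_simps)
    then have "c + (1/t) *\<^sub>R y \<in> K" using assms(5) by auto
    moreover have "y = t *\<^sub>R ((c + (1/t) *\<^sub>R y) - c)" using assms(6) by simp
    ultimately show "y \<in> C" unfolding C_def by blast
  qed
qed

lemma doubled_covers_of_line_covering:
  assumes "closed K" "convex K" and sym: "\<forall>x\<in>K. 2 *\<^sub>R c - x \<in> K" and "0 < e" "ball c e \<subseteq> K" "0 < t"
    and lines: "\<forall>L. affine L \<and> aff_dim L = 1 \<longrightarrow> L \<inter> lattice_translates t K \<noteq> {}"
  shows "p \<in> lattice_translates (2 * t) K"
proof -
  define C where "C = (\<lambda>x. t *\<^sub>R (x - c)) ` K"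
  note body = centred_scaling_of_symmetric_body[OF assms(1-6), folded C_def]
  have "0 < t * e / 2" using assms(4,6) by simp
  moreover have "\<exists>x\<in>C. 1/2 \<le> lform n x" if "n \<noteq> (0,0)" for n
    using width_of_line_covering[OF sym lines that] by (auto simp: C_def)
  ultimately obtain C' where C': "C' \<subseteq> C" "compact C'" "convex C'" "\<forall>x\<in>C'. -x \<in> C'"
      "cball 0 (t * e / 2) \<subseteq> C'" "\<And>n. n \<noteq> (0,0) \<Longrightarrow> \<exists>x\<in>C'. 1/2 \<le> lform n x"
    using compact_subbody_with_width[OF body(1-3) _ body(4)] by blast
  obtain z y where zy: "z \<in> int_lattice" "y \<in> C'" "p - (2 * t) *\<^sub>R c = 2 *\<^sub>R y + z"
    using doubled_body_covers_plane[OF C'(2-4) \<open>0 < t * e / 2\<close> C'(5,6)] by blast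
  obtain x where x: "x \<in> K" "y = t *\<^sub>R (x - c)" using zy(2) C'(1) by (auto simp: C_def)
  have "2 *\<^sub>R y = (2 * t) *\<^sub>R x - (2 * t) *\<^sub>R c" by (simp add: x(2) scaleR_diff_right)
  then have "p = (2 * t) *\<^sub>R x + z" using zy(3) by (simp add: algebra_simps)
  then show ?thesis using x(1) zy(1) unfolding lattice_translates_def by blast
qed

section \<open>Comparing the covering minima\<close>

definition admissible :: "(real^2) set \<Rightarrow> int \<Rightarrow> real \<Rightarrow> bool" where
  "admissible K d t \<longleftrightarrow> 0 \<le> t \<and> (\<forall>L. affine L \<and> aff_dim L = d \<longrightarrow> L \<inter> lattice_translates t K \<noteq> {})"

lemma covering_minimum_eq_Inf_admissible:
  "covering_minimum K j = Inf {t. admissible K (2 - int j) t}"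
  by (simp add: covering_minimum_def admissible_def)

lemma Inf_le_double_Inf:
  fixes S T :: "real set"
  assumes "S \<noteq> {}" "bdd_below T" "\<And>t. t \<in> S \<Longrightarrow> 2 * t \<in> T"
  shows "Inf T \<le> 2 * Inf S"
proof -
  have "Inf T / 2 \<le> Inf S"
    using assms by (intro cInf_greatest) (auto intro: cInf_lower[THEN order_trans] simp: field_simps)
  then show ?thesis by simp
qed

lemma centrally_symmetric_reflection:
  assumes "centrally_symmetric K"
  obtains c where "\<forall>x\<in>K. 2 *\<^sub>R c - x \<in> K"
proof -
  obtain c where c: "K = (\<lambda>x. 2 *\<^sub>R c - x) ` K" using assms unfolding centrally_symmetric_def by blast
  have "2 *\<^sub>R c - x \<in> K" if "x \<in> K" for x
  proof -
    obtain y where "y \<in> K" "x = 2 *\<^sub>R c - y" using c \<open>x \<in> K\<close> by blast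
    then show ?thesis by simp
  qed
  then show ?thesis using that by blast
qed

lemma exists_lattice_point_near:
  fixes q :: "real^2"
  shows "\<exists>z\<in>int_lattice. norm (q - z) \<le> 1"
proof -
  define z :: "real^2" where "z = vector [of_int (round (q$1)), of_int (round (q$2))]"
  have "\<bar>(q - z)$1\<bar> \<le> 1/2" "\<bar>(q - z)$2\<bar> \<le> 1/2"
    using of_int_round_abs_le[of "q$1"] of_int_round_abs_le[of "q$2"] by (simp_all add: z_def abs_minus_commute)
  then have "norm (q - z) \<le> 1"
    using norm_le_l1_cart[of "q - z"] by (simp add: sum_2)
  moreover have "z \<in> int_lattice" by (simp add: z_def int_lattice_def forall_2)
  ultimately show ?thesis by blast
qed

lemma lattice_translates_cover_plane:
  assumes "0 < e" "ball c e \<subseteq> K"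
  shows "p \<in> lattice_translates (2 / e) K"
proof -
  obtain z where z: "z \<in> int_lattice" "norm ((p - (2/e) *\<^sub>R c) - z) \<le> 1"
    using exists_lattice_point_near by blast
  define x where "x = c + (e/2) *\<^sub>R ((p - (2/e) *\<^sub>R c) - z)"
  have "dist c x \<le> e/2" using z(2) assms(1) by (simp add: x_def dist_norm)
  then have "x \<in> K" using assms by auto
  moreover have "p = (2/e) *\<^sub>R x + z" using assms(1) by (simp add: x_def algebra_simps)
  ultimately show ?thesis using z(1) unfolding lattice_translates_def by blast
qed

lemma admissible_lines_of_ball:
  assumes "0 < e" "ball c e \<subseteq> K"
  shows "admissible K 1 (2 / e)"
proof -
  have "L \<inter> lattice_translates (2 / e) K \<noteq> {}" if "aff_dim L = 1" for L :: "(real^2) set"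
  proof -
    have "L \<noteq> {}" using \<open>aff_dim L = 1\<close> by auto
    then obtain p where "p \<in> L" by blast
    then show ?thesis using lattice_translates_cover_plane[OF assms, of p] by blast
  qed
  then show ?thesis using assms(1) by (simp add: admissible_def)
qed

lemma half_not_in_Ints: "(1/2 :: real) \<notin> \<int>"
proof
  assume "(1/2 :: real) \<in> \<int>"
  then obtain k where "(1/2 :: real) = of_int k" by (auto elim: Ints_cases)
  then have "of_int (2 * k) = (1 :: real)" by simp
  then show False by presburger
qed

lemma line_avoiding_lattice_translates_zero:
  "\<exists>L. affine L \<and> aff_dim L = 1 \<and> L \<inter> lattice_translates 0 K = {}"
proof (intro exI conjI)
  let ?L = "{x :: real^2. axis 2 1 \<bullet> x = 1/2}"
  show "affine ?L" by (rule affine_hyperplane)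
  show "aff_dim ?L = 1" by (subst aff_dim_hyperplane) simp_all
  have "y \<notin> lattice_translates 0 K" if "y \<in> ?L" for y
  proof
    assume "y \<in> lattice_translates 0 K"
    then have "y $ 2 \<in> \<int>" by (auto simp: lattice_translates_def int_lattice_def)
    moreover have "y $ 2 = 1/2" using that by (simp add: inner_axis')
    ultimately show False using half_not_in_Ints by simp
  qed
  then show "?L \<inter> lattice_translates 0 K = {}" by blast
qed

lemma admissible_points_of_admissible_lines:
  assumes "closed K" "convex K" "\<forall>x\<in>K. 2 *\<^sub>R c - x \<in> K" "0 < e" "ball c e \<subseteq> K"
    and "admissible K 1 t"
  shows "admissible K 0 (2 * t)"
proof -
  have "t \<noteq> 0" using assms(6) line_avoiding_lattice_translates_zero[of K] by (auto simp: admissible_def)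
  then have "p \<in> lattice_translates (2 * t) K" for p
    using assms(6) doubled_covers_of_line_covering[OF assms(1-5)] by (simp add: admissible_def)
  then have "L \<inter> lattice_translates (2 * t) K \<noteq> {}" if "aff_dim L = 0" for L :: "(real^2) set"
    using that by (auto simp: aff_dim_eq_0)
  then show ?thesis using assms(6) by (simp add: admissible_def)
qed

theorem theorem5:
  fixes K :: "(real^2) set"
  assumes "closed K" and "convex K" and "interior K \<noteq> {}"
    and "centrally_symmetric K"
  shows "covering_minimum K 2 \<le> 2 * covering_minimum K 1"
proof -
  obtain c where sym: "\<forall>x\<in>K. 2 *\<^sub>R c - x \<in> K"
    using centrally_symmetric_reflection[OF assms(4)] by blast
  obtain c' e where "0 < e" "ball c' e \<subseteq> K" using assms(3) mem_interior by blast
  then have ball: "ball c e \<subseteq> K" using ball_centre_of_symmetric[OF assms(2) sym] by blast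
  have "Inf {t. admissible K 0 t} \<le> 2 * Inf {t. admissible K 1 t}"
  proof (rule Inf_le_double_Inf)
    show "{t. admissible K 1 t} \<noteq> {}" using admissible_lines_of_ball[OF \<open>0 < e\<close> ball] by blast
    show "bdd_below {t. admissible K 0 t}" by (auto simp: admissible_def bdd_below_def)
  qed (use admissible_points_of_admissible_lines[OF assms(1,2) sym \<open>0 < e\<close> ball] in blast)
  then show ?thesis by (simp add: covering_minimum_eq_Inf_admissible)
qed

end
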